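(* Let $R$ be a locally compact topological ring and $M$ a locally compact left topological $R$-module such that its Pontryagin dual $\widehat{M}$ (a topological right $R$-module via $\chi^r(m)=\chi(rm)$) has the no small submodules property. Then $M$ is compactly generated, i.e. there is a compact subset $K\subset M$ with $M=RK$.
   Context: All topological groups are Hausdorff; rings are unital. $\widehat{M}$ is the group of continuous homomorphisms $M\to\mathbb{S}^1$ with the compact-open topology. A topological module has the no small submodules property if there exists a neighbourhood of $0$ whose only submodule contained in it is the trivial one. $RK$ denotes the submodule generated by $K$. *)

theory Defs
  imports "HOL-Analysis.Analysis"
begin

definition topological_ring :: "('r::{ring_1,topological_space}) itself \<Rightarrow> bool" where
  "topological_ring _ \<longleftrightarrow>
     continuous_on UNIV (\<lambda>p::'r\<times>'r. fst p + snd p) \<and>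
     continuous_on UNIV (\<lambda>p::'r\<times>'r. fst p * snd p) \<and>
     continuous_on UNIV (\<lambda>x::'r. - x)"

definition left_module :: "('r::ring_1 \<Rightarrow> 'm::ab_group_add \<Rightarrow> 'm) \<Rightarrow> bool" where
  "left_module act \<longleftrightarrow>
     (\<forall>r x y. act r (x + y) = act r x + act r y) \<and>
     (\<forall>r s x. act (r + s) x = act r x + act s x) \<and>
     (\<forall>r s x. act (r * s) x = act r (act s x)) \<and>
     (\<forall>x. act 1 x = x)"

definition topological_left_module ::
  "('r::{ring_1,topological_space} \<Rightarrow> 'm::{ab_group_add,topological_space} \<Rightarrow> 'm) \<Rightarrow> bool" where
  "topological_left_module act \<longleftrightarrow>
     left_module act \<and>
     continuous_on UNIV (\<lambda>p::'r\<times>'m. act (fst p) (snd p)) \<and>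
     continuous_on UNIV (\<lambda>p::'m\<times>'m. fst p + snd p) \<and>
     continuous_on UNIV (\<lambda>x::'m. - x)"

definition is_submodule :: "('r::ring_1 \<Rightarrow> 'm::ab_group_add \<Rightarrow> 'm) \<Rightarrow> 'm set \<Rightarrow> bool" where
  "is_submodule act N \<longleftrightarrow> 0 \<in> N \<and> (\<forall>x\<in>N. \<forall>y\<in>N. x + y \<in> N) \<and>
     (\<forall>x\<in>N. - x \<in> N) \<and> (\<forall>r. \<forall>x\<in>N. act r x \<in> N)"

definition gen_submodule :: "('r::ring_1 \<Rightarrow> 'm::ab_group_add \<Rightarrow> 'm) \<Rightarrow> 'm set \<Rightarrow> 'm set" where
  "gen_submodule act K = \<Inter>{N. is_submodule act N \<and> K \<subseteq> N}"

text \<open>Pontryagin dual: continuous homomorphisms M \<rightarrow> S^1 (unit circle in \<complex>, multiplicative).\<close>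
definition characters :: "'m::{ab_group_add,topological_space} itself \<Rightarrow> ('m \<Rightarrow> complex) set" where
  "characters _ = {c. continuous_on UNIV c \<and> (\<forall>x. norm (c x) = 1) \<and>
                        (\<forall>x y::'m. c (x + y) = c x * c y)}"

text \<open>Compact-open topology on the dual, generated by the subbasis
  {c \<in> dual. c ` K \<subseteq> V}, K compact in M, V open (in \<complex>; equivalently V \<inter> S^1 open in S^1).\<close>
definition dual_topology :: "'m::{ab_group_add,topological_space} itself \<Rightarrow> ('m \<Rightarrow> complex) topology" where
  "dual_topology T = topology_generated_by
     {{c \<in> characters T. c ` K \<subseteq> V} | K V. compact K \<and> open V}"

text \<open>Right R-module structure on the dual: c^r(m) = c(r m). The group operation is pointwise product,
 zero is the trivial character.\<close>
definition dual_submodule ::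
  "('r::ring_1 \<Rightarrow> 'm::{ab_group_add,topological_space} \<Rightarrow> 'm) \<Rightarrow> ('m \<Rightarrow> complex) set \<Rightarrow> bool" where
  "dual_submodule act N \<longleftrightarrow> N \<subseteq> characters TYPE('m) \<and> (\<lambda>_. 1) \<in> N \<and>
     (\<forall>c\<in>N. \<forall>d\<in>N. (\<lambda>m. c m * d m) \<in> N) \<and>
     (\<forall>c\<in>N. (\<lambda>m. inverse (c m)) \<in> N) \<and>
     (\<forall>r. \<forall>c\<in>N. (\<lambda>m. c (act r m)) \<in> N)"

definition dual_NSS :: "('r::ring_1 \<Rightarrow> 'm::{ab_group_add,topological_space} \<Rightarrow> 'm) \<Rightarrow> bool" where
  "dual_NSS act \<longleftrightarrow> (\<exists>U. U \<subseteq> characters TYPE('m) \<and>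
     (\<exists>W. openin (dual_topology TYPE('m)) W \<and> (\<lambda>_. 1) \<in> W \<and> W \<subseteq> U) \<and>
     (\<forall>N. dual_submodule act N \<and> N \<subseteq> U \<longrightarrow> N = {\<lambda>_. 1}))"

end

theory Submission
  imports Defs "HOL-Algebra.Group"
begin

text \<open>Let K0 be a compact neighbourhood of 0 and K1 a compact set whose annihilator lies in the
  neighbourhood of the trivial character given by the no small submodules property. Then RK, for
  K = K0 \<union> K1, is an open submodule, and its annihilator is a dual submodule inside that
  neighbourhood, hence trivial. Since the circle group is divisible, characters of an abelian group
  separate points from subgroups; a character trivial on the open subgroup RK is continuous, so
  RK = M.\<close>

definition additive_group :: "'a::ab_group_add monoid" where
  "additive_group = \<lparr>carrier = UNIV, monoid.mult = (+), one = 0\<rparr>"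

interpretation additive: comm_group "additive_group :: 'a::ab_group_add monoid"
  by (rule comm_groupI) (auto simp: additive_group_def add.assoc add.commute intro: exI[of _ "- x" for x])

definition int_mult :: "int \<Rightarrow> 'a::ab_group_add \<Rightarrow> 'a" where
  "int_mult n x = x [^]\<^bsub>additive_group\<^esub> n"

lemma int_mult_add: "int_mult (m + n) x = int_mult m x + int_mult n x"
  using additive.int_pow_mult[of x m n] by (simp add: int_mult_def additive_group_def)

lemma int_mult_mult: "int_mult (m * n) x = int_mult n (int_mult m x)"
  using additive.int_pow_pow[of x m n] by (simp add: int_mult_def additive_group_def)

lemma int_mult_0 [simp]: "int_mult 0 x = 0"
  by (simp add: int_mult_def additive_group_def)

lemma int_mult_1 [simp]: "int_mult 1 x = x"
  using additive.int_pow_1[of x] by (simp add: int_mult_def additive_group_def)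

lemma int_mult_minus: "int_mult (- n) x = - int_mult n x"
  using int_mult_add[of n "- n" x] by (simp add: eq_neg_iff_add_eq_0 add.commute)

lemma int_mult_diff: "int_mult (m - n) x = int_mult m x - int_mult n x"
  using int_mult_add[of m "- n" x] by (simp add: int_mult_minus)

lemma int_ideal_generator:
  fixes I :: "int set"
  assumes "0 \<in> I" and add: "\<And>a b. a \<in> I \<Longrightarrow> b \<in> I \<Longrightarrow> a + b \<in> I"
    and mult: "\<And>a c. a \<in> I \<Longrightarrow> c * a \<in> I"
  shows "\<exists>k::nat. int k \<in> I \<and> (\<forall>n\<in>I. int k dvd n)"
proof (cases "I = {0}")
  case True
  then show ?thesis by (intro exI[of _ 0]) auto
next
  case False
  then obtain n where "n \<in> I" "n \<noteq> 0" using \<open>0 \<in> I\<close> by blast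
  then have "int (nat \<bar>n\<bar>) \<in> I \<and> nat \<bar>n\<bar> > 0"
    using mult[of n "sgn n"] by (simp add: abs_sgn[symmetric] mult.commute)
  then have pos: "\<exists>k. int k \<in> I \<and> k > 0" by blast
  define k where "k = (LEAST k. int k \<in> I \<and> k > 0)"
  have k: "int k \<in> I" "k > 0"
    using LeastI_ex[OF pos] unfolding k_def by auto
  have "int k dvd m" if "m \<in> I" for m
  proof -
    have "m mod int k = m + (- (m div int k)) * int k"
      by (simp add: minus_div_mult_eq_mod[symmetric])
    then have "m mod int k \<in> I"
      using add[OF that mult[OF k(1), of "- (m div int k)"]] by simp
    then have "int (nat (m mod int k)) \<in> I"
      using k(2) by simp
    have "nat (m mod int k) = 0"
    proof (rule ccontr)
      assume "nat (m mod int k) \<noteq> 0"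
      with \<open>int (nat (m mod int k)) \<in> I\<close> have "k \<le> nat (m mod int k)"
        using Least_le[of "\<lambda>j. int j \<in> I \<and> j > 0", folded k_def] by simp
      moreover have "nat (m mod int k) < k"
        using k(2) by (simp add: nat_less_iff)
      ultimately show False by simp
    qed
    moreover have "m mod int k \<ge> 0"
      using k(2) by simp
    ultimately show ?thesis
      by (simp add: dvd_eq_mod_eq_0)
  qed
  with k show ?thesis by blast
qed

lemma exists_unimodular_root_ne_1:
  fixes w :: complex
  assumes "norm w = 1" and "k \<ge> 2"
  shows "\<exists>z. norm z = 1 \<and> z \<noteq> 1 \<and> z ^ k = w"
proof -
  define z where "z = cis (Arg w / real k)"
  define \<zeta> where "\<zeta> = exp (2 * of_real pi * \<i> * of_nat 1 / of_nat k)"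
  have "w \<noteq> 0"
    using assms by auto
  have "z ^ k = cis (Arg w)"
    unfolding z_def Complex.DeMoivre using assms(2) by simp
  then have "z ^ k = sgn w"
    using \<open>w \<noteq> 0\<close> by (simp add: cis_Arg)
  then have "z ^ k = w"
    using assms by (simp add: sgn_div_norm)
  moreover have "\<zeta> ^ k = 1" "\<zeta> \<noteq> 1"
    using assms complex_root_unity[of k 1] complex_root_unity_eq_1[of k 1] by (auto simp: \<zeta>_def)
  moreover have "norm z = 1" "norm \<zeta> = 1"
    by (simp_all add: z_def \<zeta>_def)
  ultimately show ?thesis
    by (cases "z = 1") auto
qed

text \<open>Partial characters are handled through their graphs, so that the union of a chain of them is
  again one; the domain of a graph is a subgroup.\<close>

definition character_graph :: "('a::ab_group_add \<times> complex) set \<Rightarrow> bool" where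
  "character_graph G \<longleftrightarrow> (0, 1) \<in> G \<and> single_valued G \<and>
     (\<forall>a u. (a, u) \<in> G \<longrightarrow> norm u = 1 \<and> (- a, inverse u) \<in> G) \<and>
     (\<forall>a u b v. (a, u) \<in> G \<longrightarrow> (b, v) \<in> G \<longrightarrow> (a + b, u * v) \<in> G)"

lemma character_graphI:
  assumes "(0, 1) \<in> G" "single_valued G"
    and "\<And>a u. (a, u) \<in> G \<Longrightarrow> norm u = 1"
    and "\<And>a u. (a, u) \<in> G \<Longrightarrow> (- a, inverse u) \<in> G"
    and "\<And>a u b v. (a, u) \<in> G \<Longrightarrow> (b, v) \<in> G \<Longrightarrow> (a + b, u * v) \<in> G"
  shows "character_graph G"
  using assms unfolding character_graph_def by blast

definition extend_graph :: "('a::ab_group_add \<times> complex) set \<Rightarrow> 'a \<Rightarrow> complex \<Rightarrow> ('a \<times> complex) set"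
  where "extend_graph G y z = {(s + int_mult n y, u * z powi n) | s u n. (s, u) \<in> G}"

lemma subset_extend_graph: "G \<subseteq> extend_graph G y z"
  unfolding extend_graph_def by (force intro: exI[of _ 0])

context
  fixes G :: "('a::ab_group_add \<times> complex) set"
  assumes G: "character_graph G"
begin

lemma character_graph_zero: "(0, 1) \<in> G"
  using G unfolding character_graph_def by blast

lemma character_graph_unique: "(a, u) \<in> G \<Longrightarrow> (a, v) \<in> G \<Longrightarrow> u = v"
  using G unfolding character_graph_def single_valued_def by blast

lemma character_graph_norm: "(a, u) \<in> G \<Longrightarrow> norm u = 1"
  using G unfolding character_graph_def by blast

lemma character_graph_minus: "(a, u) \<in> G \<Longrightarrow> (- a, inverse u) \<in> G"
  using G unfolding character_graph_def by blast

lemma character_graph_add: "(a, u) \<in> G \<Longrightarrow> (b, v) \<in> G \<Longrightarrow> (a + b, u * v) \<in> G"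
  using G unfolding character_graph_def by blast

lemma character_graph_diff:
  assumes "(a, u) \<in> G" "(b, v) \<in> G"
  shows "(a - b, u / v) \<in> G"
  using character_graph_add[OF assms(1) character_graph_minus[OF assms(2)]]
  by (simp add: field_simps)

lemma character_graph_int_mult:
  assumes "(a, u) \<in> G"
  shows "(int_mult n a, u powi n) \<in> G"
proof (induction n rule: int_induct[where k = 0])
  case base
  show ?case using character_graph_zero by simp
next
  case (step1 i)
  then show ?case
    using character_graph_add[OF step1(2) assms] character_graph_norm[OF assms]
    by (auto simp: int_mult_add power_int_add)
next
  case (step2 i)
  then show ?case
    using character_graph_diff[OF step2(2) assms] character_graph_norm[OF assms]
    by (auto simp: int_mult_diff power_int_diff)
qed

lemma character_graph_multiples_generator:
  "\<exists>k::nat. (\<exists>w. (int_mult (int k) g, w) \<in> G) \<and> (\<forall>n u. (int_mult n g, u) \<in> G \<longrightarrow> int k dvd n)"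
proof -
  have "\<exists>k::nat. int k \<in> {n. \<exists>u. (int_mult n g, u) \<in> G} \<and>
      (\<forall>n\<in>{n. \<exists>u. (int_mult n g, u) \<in> G}. int k dvd n)"
  proof (rule int_ideal_generator)
    show "0 \<in> {n. \<exists>u. (int_mult n g, u) \<in> G}"
      using character_graph_zero by auto
    show "a + b \<in> {n. \<exists>u. (int_mult n g, u) \<in> G}"
      if "a \<in> {n. \<exists>u. (int_mult n g, u) \<in> G}" "b \<in> {n. \<exists>u. (int_mult n g, u) \<in> G}" for a b
      using that character_graph_add by (fastforce simp: int_mult_add)
    show "c * a \<in> {n. \<exists>u. (int_mult n g, u) \<in> G}"
      if "a \<in> {n. \<exists>u. (int_mult n g, u) \<in> G}" for a c
      using that character_graph_int_mult[of "int_mult a g" _ c]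
      by (auto simp: int_mult_mult mult.commute)
  qed
  then show ?thesis by blast
qed

text \<open>Divisibility of the circle group: the multiples of y in the domain of G are those of some k,
  and any k-th root of the value at k y is compatible; for k \<noteq> 1 one of these roots is \<noteq> 1.\<close>
lemma character_graph_compatible_value:
  assumes "y \<notin> Domain G"
  shows "\<exists>z. norm z = 1 \<and> z \<noteq> 1 \<and> (\<forall>n u. (int_mult n y, u) \<in> G \<longrightarrow> u = z powi n)"
proof -
  obtain k :: nat and w where w: "(int_mult (int k) y, w) \<in> G"
    and dvd: "\<And>n u. (int_mult n y, u) \<in> G \<Longrightarrow> int k dvd n"
    using character_graph_multiples_generator by blast
  consider "k = 0" | "k = 1" | "k \<ge> 2" by linarith
  then show ?thesis
  proof cases
    case 1
    have "u = (- 1) powi n" if "(int_mult n y, u) \<in> G" for n u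
      using dvd[OF that] that character_graph_unique[OF _ character_graph_zero] by (simp add: 1)
    then show ?thesis by (intro exI[of _ "- 1"]) auto
  next
    case 2
    then show ?thesis using w assms by auto
  next
    case 3
    obtain z where z: "norm z = 1" "z \<noteq> 1" "z ^ k = w"
      using exists_unimodular_root_ne_1[OF character_graph_norm[OF w] 3] by blast
    have "u = z powi n" if nu: "(int_mult n y, u) \<in> G" for n u
    proof -
      obtain q where q: "n = int k * q" using dvd[OF nu] by (elim dvdE)
      have "(int_mult n y, w powi q) \<in> G"
        using character_graph_int_mult[OF w, of q] by (simp add: q int_mult_mult)
      then have "u = w powi q" using nu character_graph_unique by blast
      also have "\<dots> = z powi n" by (simp add: q z(3)[symmetric] power_int_mult)
      finally show ?thesis .
    qed
    with z show ?thesis by blast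
  qed
qed

lemma extend_graph_new_value: "(y, z) \<in> extend_graph G y z"
  unfolding extend_graph_def using character_graph_zero by (force intro: exI[of _ 1])

context
  fixes y :: 'a and z :: complex
  assumes z: "norm z = 1" and compatible: "\<And>n u. (int_mult n y, u) \<in> G \<Longrightarrow> u = z powi n"
begin

lemma single_valued_extend_graph: "single_valued (extend_graph G y z)"
proof (rule single_valuedI)
  fix x v v'
  assume "(x, v) \<in> extend_graph G y z" "(x, v') \<in> extend_graph G y z"
  then obtain s u n s' u' n' where su: "(s, u) \<in> G" "x = s + int_mult n y" "v = u * z powi n"
    and su': "(s', u') \<in> G" "x = s' + int_mult n' y" "v' = u' * z powi n'"
    unfolding extend_graph_def by blast
  have "int_mult (n - n') y = s' - s"
    using su(2) su'(2) by (simp add: int_mult_diff algebra_simps)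
  then have "u' / u = z powi (n - n')"
    using compatible character_graph_diff[OF su'(1) su(1)] by metis
  moreover have "u \<noteq> 0" "z \<noteq> 0"
    using character_graph_norm[OF su(1)] z by auto
  ultimately show "v = v'"
    by (simp add: su(3) su'(3) power_int_diff field_simps)
qed

lemma character_graph_extend_graph: "character_graph (extend_graph G y z)"
proof (rule character_graphI)
  have z0: "z \<noteq> 0"
    using z by auto
  show "(0, 1) \<in> extend_graph G y z"
    using subset_extend_graph character_graph_zero by blast
  show "single_valued (extend_graph G y z)"
    by (rule single_valued_extend_graph)
  show "norm v = 1" if "(x, v) \<in> extend_graph G y z" for x v
    using that z character_graph_norm unfolding extend_graph_def
    by (auto simp: norm_mult norm_power_int)
  show "(- x, inverse v) \<in> extend_graph G y z" if xv: "(x, v) \<in> extend_graph G y z" for x v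
  proof -
    obtain s u n where "(s, u) \<in> G" "x = s + int_mult n y" "v = u * z powi n"
      using xv unfolding extend_graph_def by blast
    moreover have "- x = - s + int_mult (- n) y" "inverse v = inverse u * z powi (- n)"
      using calculation z0 by (simp_all add: int_mult_minus power_int_minus)
    ultimately show ?thesis
      unfolding extend_graph_def using character_graph_minus by blast
  qed
  show "(x + x', v * v') \<in> extend_graph G y z"
    if xv: "(x, v) \<in> extend_graph G y z" "(x', v') \<in> extend_graph G y z" for x v x' v'
  proof -
    obtain s u n s' u' n' where "(s, u) \<in> G" "x = s + int_mult n y" "v = u * z powi n"
      and "(s', u') \<in> G" "x' = s' + int_mult n' y" "v' = u' * z powi n'"
      using xv unfolding extend_graph_def by blast
    moreover have "x + x' = (s + s') + int_mult (n + n') y"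
      "v * v' = (u * u') * z powi (n + n')"
      using calculation z0 by (simp_all add: int_mult_add power_int_add algebra_simps)
    ultimately show ?thesis
      unfolding extend_graph_def using character_graph_add by blast
  qed
qed

end

end

lemma character_graph_chain_Union:
  assumes "C \<noteq> {}" "\<And>G. G \<in> C \<Longrightarrow> character_graph G"
    and chain: "\<And>G G'. G \<in> C \<Longrightarrow> G' \<in> C \<Longrightarrow> G \<subseteq> G' \<or> G' \<subseteq> G"
  shows "character_graph (\<Union>C)"
proof -
  have common: "\<exists>G\<in>C. p \<in> G \<and> q \<in> G" if "p \<in> \<Union>C" "q \<in> \<Union>C" for p q
    using that chain by blast
  show ?thesis
  proof (rule character_graphI)
    show "(0, 1) \<in> \<Union>C"
      using assms(1,2) character_graph_zero by blast
    show "single_valued (\<Union>C)"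
      using common assms(2) character_graph_unique by (metis single_valuedI)
    show "norm u = 1" if "(a, u) \<in> \<Union>C" for a u
      using that assms(2) character_graph_norm by blast
    show "(- a, inverse u) \<in> \<Union>C" if "(a, u) \<in> \<Union>C" for a u
      using that assms(2) character_graph_minus by blast
    show "(a + b, u * v) \<in> \<Union>C" if "(a, u) \<in> \<Union>C" "(b, v) \<in> \<Union>C" for a u b v
      using common[OF that] assms(2) character_graph_add by blast
  qed
qed

lemma character_graph_extend_total:
  assumes "character_graph G\<^sub>0"
  shows "\<exists>G. character_graph G \<and> G\<^sub>0 \<subseteq> G \<and> Domain G = UNIV"
proof -
  define \<G> where "\<G> = {G. character_graph G \<and> G\<^sub>0 \<subseteq> G}"
  have "\<exists>M\<in>\<G>. \<forall>G\<in>\<G>. M \<subseteq> G \<longrightarrow> G = M"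
  proof (rule subset_Zorn_nonempty)
    have "G\<^sub>0 \<in> \<G>"
      using assms by (simp add: \<G>_def)
    then show "\<G> \<noteq> {}"
      by blast
    show "\<Union>C \<in> \<G>" if "C \<noteq> {}" "subset.chain \<G> C" for C
    proof -
      have C: "C \<subseteq> \<G>" "\<And>G G'. G \<in> C \<Longrightarrow> G' \<in> C \<Longrightarrow> G \<subseteq> G' \<or> G' \<subseteq> G"
        using that(2) unfolding subset.chain_def by blast+
      then have "character_graph (\<Union>C)"
        using that(1) by (intro character_graph_chain_Union) (auto simp: \<G>_def)
      moreover have "G\<^sub>0 \<subseteq> \<Union>C"
        using that(1) C(1) by (auto simp: \<G>_def)
      ultimately show ?thesis
        by (simp add: \<G>_def)
    qed
  qed
  then obtain M where M: "character_graph M" "G\<^sub>0 \<subseteq> M"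
    and maximal: "\<And>G. character_graph G \<Longrightarrow> M \<subseteq> G \<Longrightarrow> G = M"
    unfolding \<G>_def by auto
  have "y \<in> Domain M" for y
  proof (rule ccontr)
    assume y: "y \<notin> Domain M"
    then obtain z where "norm z = 1" "\<And>n u. (int_mult n y, u) \<in> M \<Longrightarrow> u = z powi n"
      using character_graph_compatible_value[OF M(1)] by blast
    then have "character_graph (extend_graph M y z)"
      by (rule character_graph_extend_graph[OF M(1)])
    with maximal have "extend_graph M y z = M"
      using subset_extend_graph by blast
    then have "(y, z) \<in> M"
      using extend_graph_new_value[OF M(1), of y z] by simp
    with y show False
      by blast
  qed
  with M show ?thesis
    by blast
qed

theorem exists_character_separating:
  fixes H :: "'a::ab_group_add set"
  assumes "0 \<in> H" "\<And>a b. a \<in> H \<Longrightarrow> b \<in> H \<Longrightarrow> a + b \<in> H" "\<And>a. a \<in> H \<Longrightarrow> - a \<in> H"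
    and "y \<notin> H"
  shows "\<exists>\<phi> :: 'a \<Rightarrow> complex. (\<forall>a b. \<phi> (a + b) = \<phi> a * \<phi> b) \<and> (\<forall>x. norm (\<phi> x) = 1) \<and> (\<forall>x\<in>H. \<phi> x = 1) \<and> \<phi> y \<noteq> 1"
proof -
  have H: "character_graph (H \<times> {1})"
    using assms(1-3) by (intro character_graphI) (auto simp: single_valued_def)
  obtain z :: complex where z: "norm z = 1" "z \<noteq> 1"
    and compatible: "\<And>n u. (int_mult n y, u) \<in> H \<times> {1} \<Longrightarrow> u = z powi n"
    using character_graph_compatible_value[OF H, of y] assms(4) by (auto simp: Domain_iff)
  define G\<^sub>1 where "G\<^sub>1 = extend_graph (H \<times> {1}) y z"
  have G\<^sub>1: "character_graph G\<^sub>1" "H \<times> {1} \<subseteq> G\<^sub>1" "(y, z) \<in> G\<^sub>1"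
    unfolding G\<^sub>1_def using character_graph_extend_graph[OF H z(1) compatible]
    by (simp_all add: subset_extend_graph extend_graph_new_value[OF H])
  obtain G where G: "character_graph G" "G\<^sub>1 \<subseteq> G" "Domain G = UNIV"
    using character_graph_extend_total[OF G\<^sub>1(1)] by blast
  then have "\<forall>x. \<exists>u. (x, u) \<in> G"
    by blast
  then obtain \<phi> where \<phi>: "\<And>x. (x, \<phi> x) \<in> G"
    by metis
  have \<phi>_eq: "\<phi> x = u" if "(x, u) \<in> G" for x u
    using character_graph_unique[OF G(1) \<phi> that] .
  show ?thesis
  proof (intro exI[of _ \<phi>] conjI allI ballI)
    show "\<phi> (a + b) = \<phi> a * \<phi> b" for a b
      using \<phi>_eq[OF character_graph_add[OF G(1) \<phi> \<phi>]] .
    show "norm (\<phi> x) = 1" for x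
      using character_graph_norm[OF G(1) \<phi>] .
    show "\<phi> x = 1" if "x \<in> H" for x
      using \<phi>_eq that G(2) G\<^sub>1(2) by blast
    show "\<phi> y \<noteq> 1"
      using \<phi>_eq G(2) G\<^sub>1(3) \<open>z \<noteq> 1\<close> by blast
  qed
qed

lemma is_submodule_gen_submodule: "is_submodule act (gen_submodule act K)"
  unfolding gen_submodule_def is_submodule_def
  by (intro conjI ballI allI) simp_all

lemma gen_submodule_superset: "K \<subseteq> gen_submodule act K"
  unfolding gen_submodule_def by blast

lemma charactersD:
  assumes "c \<in> characters TYPE('m::{ab_group_add,topological_space})"
  shows "continuous_on UNIV c" "norm (c x) = 1" "c (x + y) = c x * c y"
  using assms unfolding characters_def by auto

lemma one_in_characters: "(\<lambda>_. 1) \<in> characters TYPE('m::{ab_group_add,topological_space})"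
  unfolding characters_def by simp

lemma mult_in_characters:
  assumes "c \<in> characters TYPE('m::{ab_group_add,topological_space})" "d \<in> characters TYPE('m)"
  shows "(\<lambda>m. c m * d m) \<in> characters TYPE('m)"
  unfolding characters_def
  using charactersD[OF assms(1)] charactersD[OF assms(2)]
  by (auto intro: continuous_on_mult simp: norm_mult mult_ac)

lemma inverse_in_characters:
  assumes "c \<in> characters TYPE('m::{ab_group_add,topological_space})"
  shows "(\<lambda>m. inverse (c m)) \<in> characters TYPE('m)"
proof -
  have "\<forall>x\<in>UNIV. c x \<noteq> 0"
    using charactersD(2)[OF assms] by (metis norm_zero zero_neq_one)
  then show ?thesis
    unfolding characters_def using charactersD[OF assms]
    by (auto intro: continuous_on_inverse simp: norm_inverse)
qed

lemma comp_in_characters: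
  assumes "c \<in> characters TYPE('m::{ab_group_add,topological_space})"
    and "continuous_on UNIV f" "\<And>x y. f (x + y) = f x + f y"
  shows "(\<lambda>m. c (f m)) \<in> characters TYPE('m)"
  unfolding characters_def
  using charactersD[OF assms(1)] continuous_on_compose2[OF charactersD(1)[OF assms(1)] assms(2)] assms(3)
  by auto

lemma continuous_on_hom_if_trivial_near_0:
  fixes \<phi> :: "'m::{ab_group_add,topological_space} \<Rightarrow> complex"
  assumes add: "continuous_on UNIV (\<lambda>p::'m \<times> 'm. fst p + snd p)"
    and hom: "\<And>a b. \<phi> (a + b) = \<phi> a * \<phi> b"
    and U: "open U" "0 \<in> U" "\<And>x. x \<in> U \<Longrightarrow> \<phi> x = 1"
  shows "continuous_on UNIV \<phi>"
proof -
  have locally_constant: "\<exists>T. open T \<and> x \<in> T \<and> (\<forall>w\<in>T. \<phi> w = \<phi> x)" for x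
  proof (intro exI conjI)
    have "continuous_on UNIV (\<lambda>w::'m. w - x)"
      by (rule continuous_on_compose2[OF add, of UNIV "\<lambda>w. (w, - x)", simplified])
         (intro continuous_intros)
    then show "open ((\<lambda>w. w - x) -` U)"
      using U(1) by (rule open_vimage[rotated])
    show "x \<in> (\<lambda>w. w - x) -` U"
      using U(2) by simp
    show "\<forall>w\<in>(\<lambda>w. w - x) -` U. \<phi> w = \<phi> x"
      using hom U(3) by (metis diff_add_cancel mult_1 vimageE)
  qed
  show ?thesis
    unfolding continuous_on_open_vimage[OF open_UNIV]
  proof (intro allI impI)
    fix B :: "complex set"
    show "open (\<phi> -` B \<inter> UNIV)"
      unfolding open_subopen[of "\<phi> -` B \<inter> UNIV"]
      using locally_constant by fastforce
  qed
qed

definition annihilator :: "'m::{ab_group_add,topological_space} set \<Rightarrow> ('m \<Rightarrow> complex) set" where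
  "annihilator N = {c \<in> characters TYPE('m::{ab_group_add,topological_space}). \<forall>x\<in>N. c x = 1}"

lemma annihilator_antimono: "A \<subseteq> B \<Longrightarrow> annihilator B \<subseteq> annihilator A"
  unfolding annihilator_def by blast

lemma annihilator_Un: "annihilator (A \<union> B) = annihilator A \<inter> annihilator B"
  unfolding annihilator_def by blast

lemma annihilator_dual_submodule:
  fixes act :: "'r::{ring_1,topological_space} \<Rightarrow> 'm::{ab_group_add,topological_space} \<Rightarrow> 'm"
  assumes "topological_left_module act" "is_submodule act N"
  shows "dual_submodule act (annihilator N)"
  unfolding dual_submodule_def
proof (intro conjI ballI allI)
  show "annihilator N \<subseteq> characters TYPE('m)" "(\<lambda>_. 1) \<in> annihilator N"
    unfolding annihilator_def using one_in_characters by auto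
  show "(\<lambda>m. c m * d m) \<in> annihilator N" if "c \<in> annihilator N" "d \<in> annihilator N" for c d
    using that mult_in_characters unfolding annihilator_def by auto
  show "(\<lambda>m. inverse (c m)) \<in> annihilator N" if "c \<in> annihilator N" for c
    using that inverse_in_characters unfolding annihilator_def by auto
  show "(\<lambda>m. c (act r m)) \<in> annihilator N" if "c \<in> annihilator N" for r c
  proof -
    have act: "continuous_on UNIV (\<lambda>p. act (fst p) (snd p))" "left_module act"
      using assms(1) unfolding topological_left_module_def by auto
    have "continuous_on UNIV (act r)"
      by (rule continuous_on_compose2[OF act(1), of UNIV "\<lambda>m. (r, m)", simplified])
         (intro continuous_intros)
    moreover have "\<And>x y. act r (x + y) = act r x + act r y"
      using act(2) unfolding left_module_def by blast
    ultimately have "(\<lambda>m. c (act r m)) \<in> characters TYPE('m)" if "c \<in> characters TYPE('m)"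
      using comp_in_characters[OF that] by blast
    with that assms(2) show ?thesis
      unfolding annihilator_def is_submodule_def by auto
  qed
qed

lemma dual_topology_nhds_one_contains_annihilator:
  assumes "openin (dual_topology TYPE('m::{ab_group_add,topological_space})) W" "(\<lambda>_. 1) \<in> W"
  shows "\<exists>K::'m set. compact K \<and> annihilator K \<subseteq> W"
proof -
  have "generate_topology_on {{c \<in> characters TYPE('m). c ` K \<subseteq> V} | K V. compact K \<and> open V} W"
    using assms(1) unfolding dual_topology_def openin_topology_generated_by_iff .
  then show ?thesis
    using assms(2)
  proof (induction rule: generate_topology_on.induct)
    case Empty
    then show ?case by simp
  next
    case (Int a b)
    then obtain Ka Kb :: "'m set" where "compact Ka" "annihilator Ka \<subseteq> a" "compact Kb" "annihilator Kb \<subseteq> b"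
      by (meson IntD1 IntD2)
    then have "compact (Ka \<union> Kb)" "annihilator (Ka \<union> Kb) \<subseteq> a \<inter> b"
      by (auto simp: compact_Un annihilator_Un)
    then show ?case
      by blast
  next
    case (UN \<K>)
    then obtain k where "k \<in> \<K>" "(\<lambda>_. 1) \<in> k"
      by blast
    with UN.IH obtain K :: "'m set" where "compact K" "annihilator K \<subseteq> k"
      by blast
    with \<open>k \<in> \<K>\<close> show ?case
      by blast
  next
    case (Basis s)
    then obtain K V where s: "s = {c \<in> characters TYPE('m). c ` K \<subseteq> V}" "compact K" "open V"
      by blast
    have "annihilator K \<subseteq> s"
    proof
      fix c
      assume c: "c \<in> annihilator K"
      then have "c ` K = (\<lambda>_. 1) ` K"
        unfolding annihilator_def by auto
      also have "\<dots> \<subseteq> V"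
        using Basis.prems s(1) by blast
      finally show "c \<in> s"
        using c s(1) unfolding annihilator_def by blast
    qed
    with s(2) show ?case
      by blast
  qed
qed

lemma subgroup_eq_UNIV_if_annihilator_trivial:
  fixes N :: "'m::{ab_group_add,topological_space} set"
  assumes add: "continuous_on UNIV (\<lambda>p::'m \<times> 'm. fst p + snd p)"
    and N: "0 \<in> N" "\<And>a b. a \<in> N \<Longrightarrow> b \<in> N \<Longrightarrow> a + b \<in> N" "\<And>a. a \<in> N \<Longrightarrow> - a \<in> N"
    and U: "open U" "0 \<in> U" "U \<subseteq> N"
    and trivial: "annihilator N \<subseteq> {\<lambda>_. 1}"
  shows "N = UNIV"
proof (rule ccontr)
  assume "N \<noteq> UNIV"
  then obtain y where "y \<notin> N"
    by blast
  then obtain \<phi> :: "'m \<Rightarrow> complex" where \<phi>: "\<forall>a b. \<phi> (a + b) = \<phi> a * \<phi> b"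
    "\<forall>x. norm (\<phi> x) = 1" "\<forall>x\<in>N. \<phi> x = 1" "\<phi> y \<noteq> 1"
    using exists_character_separating[OF N] by blast
  have "continuous_on UNIV \<phi>"
    using add U \<phi>(1,3) by (intro continuous_on_hom_if_trivial_near_0[of \<phi> U]) auto
  with \<phi>(1-3) have "\<phi> \<in> annihilator N"
    unfolding annihilator_def characters_def by blast
  with trivial \<phi>(4) show False
    by auto
qed

theorem mainTheorem16:
  fixes act :: "'r::{ring_1,t2_space} \<Rightarrow> 'm::{ab_group_add,t2_space} \<Rightarrow> 'm"
  assumes "topological_ring TYPE('r)"
    and "locally_compact_space (euclidean :: 'r topology)"
    and "topological_left_module act"
    and "locally_compact_space (euclidean :: 'm topology)"
    and "dual_NSS act"
  shows "\<exists>K. compact K \<and> gen_submodule act K = UNIV"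
proof -
  have "\<exists>U K. open U \<and> compact K \<and> (0::'m) \<in> U \<and> U \<subseteq> K"
    using assms(4) unfolding locally_compact_space_def by auto
  then obtain U\<^sub>0 K\<^sub>0 where U\<^sub>0: "open U\<^sub>0" "0 \<in> U\<^sub>0" "U\<^sub>0 \<subseteq> K\<^sub>0" and "compact (K\<^sub>0 :: 'm set)"
    by blast
  obtain U W where W: "openin (dual_topology TYPE('m)) W" "(\<lambda>_. 1) \<in> W" "W \<subseteq> U"
    and NSS: "\<And>N. dual_submodule act N \<Longrightarrow> N \<subseteq> U \<Longrightarrow> N = {\<lambda>_. 1}"
    using assms(5) unfolding dual_NSS_def by blast
  obtain K\<^sub>1 where "compact K\<^sub>1" "annihilator K\<^sub>1 \<subseteq> U"
    using dual_topology_nhds_one_contains_annihilator[OF W(1,2)] W(3) by blast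
  define RK where "RK = gen_submodule act (K\<^sub>0 \<union> K\<^sub>1)"
  have RK: "is_submodule act RK" "K\<^sub>0 \<union> K\<^sub>1 \<subseteq> RK"
    unfolding RK_def by (rule is_submodule_gen_submodule gen_submodule_superset)+
  have "annihilator RK \<subseteq> U"
    using annihilator_antimono[of K\<^sub>1 RK] RK(2) \<open>annihilator K\<^sub>1 \<subseteq> U\<close> by blast
  then have "annihilator RK = {\<lambda>_. 1}"
    by (rule NSS[OF annihilator_dual_submodule[OF assms(3) RK(1)]])
  moreover have "continuous_on UNIV (\<lambda>p::'m \<times> 'm. fst p + snd p)"
    using assms(3) unfolding topological_left_module_def by blast
  ultimately have "RK = UNIV"
    using RK U\<^sub>0 unfolding is_submodule_def
    by (intro subgroup_eq_UNIV_if_annihilator_trivial[of RK U\<^sub>0]) auto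
  moreover have "compact (K\<^sub>0 \<union> K\<^sub>1)"
    using \<open>compact K\<^sub>0\<close> \<open>compact K\<^sub>1\<close> by (rule compact_Un)
  ultimately show ?thesis
    unfolding RK_def by blast
qed

end
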